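(* There exists a family $\mathcal{E}\subset\mathcal{T}$ with $|\mathcal{E}|=2^{2^{\mathfrak{c}}}$ such that for every $\tau\in\mathcal{E}$ we have $\Gamma(\tau)=\mathbb{R}$ and the Hausdorff space $(\mathbb{R},\tau)$ is separable and connected, and the spaces $(\mathbb{R},\tau)$, $\tau\in\mathcal{E}$, are incomparable.
   Context: $\eta$ denotes the Euclidean topology on $\mathbb{R}$; $\mathcal{T}$ is the family of all topologies on $\mathbb{R}$ finer than $\eta$. $\Gamma(\tau)=\{x\in\mathbb{R}:\mathcal{U}_\eta(x)\neq\mathcal{U}_\tau(x)\}$ where $\mathcal{U}_\tau(x)$ is the neighborhood filter of $x$ in $\tau$. Topological spaces $X_i$ ($i\in I$) are incomparable if, for all $i,j\in I$, whenever $X_i$ is homeomorphic to a subspace $S_j$ of $X_j$, then $i=j$ and $S_j=X_j$. $\mathfrak{c}=2^{\aleph_0}$. *)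

theory Defs
  imports "HOL-Analysis.Analysis" "HOL-Library.Equipollence"
begin

definition finer_than_euclidean :: "real topology \<Rightarrow> bool" where
  "finer_than_euclidean \<tau> \<longleftrightarrow> topspace \<tau> = UNIV \<and> (\<forall>S. open S \<longrightarrow> openin \<tau> S)"

definition nbhds :: "'a topology \<Rightarrow> 'a \<Rightarrow> 'a set set" where
  "nbhds \<tau> x = {N. \<exists>U. openin \<tau> U \<and> x \<in> U \<and> U \<subseteq> N}"

definition Gamma :: "real topology \<Rightarrow> real set" where
  "Gamma \<tau> = {x. nbhds euclidean x \<noteq> nbhds \<tau> x}"

definition incomparable_family :: "'i set \<Rightarrow> ('i \<Rightarrow> 'a topology) \<Rightarrow> bool" where
  "incomparable_family I X \<longleftrightarrow>
     (\<forall>i\<in>I. \<forall>j\<in>I. \<forall>S. S \<subseteq> topspace (X j) \<and> X i homeomorphic_space subtopology (X j) S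
        \<longrightarrow> i = j \<and> S = topspace (X j))"

end

theory Submission
  imports Defs
begin

text \<open>
  Every topology of the family is generated by the Euclidean one and an ideal \<C> of sets that miss
  the countable dense set of triadic midpoints: V is open iff each x \<in> V has a set ball x e - C
  inside V with C \<in> \<C>. Such a topology is Hausdorff, separable and connected, and at a point x it
  may be non-Euclidean on the left, on the right, or on both sides.

  An embedding between two such spaces maps intervals to connected sets, so it is a strictly
  monotone continuous map with open range, and it respects the sides on which the topologies are
  non-Euclidean. Both sides are made non-Euclidean exactly on a closed nowhere dense Cantor set K,
  and off K a single side is selected by a set B, constructed by transfinite diagonalisation
  against the continuum many continuous injections. An embedding must map the complement of K
  into itself, and then B forbids every embedding other than the identity.

  What happens at the points of K is governed by an ideal generated by a subfamily of an
  independent family of subsets of K accumulating at 0; the 2^(2^c) subfamilies give pairwise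
  distinct topologies.
\<close>

section \<open>A Cantor set and the triadic midpoints\<close>

definition ternary :: "nat set \<Rightarrow> real" where
  "ternary A = (\<Sum>n. (if n \<in> A then 2 else 0) / 3 ^ Suc n)"

lemma summable_ternary: "summable (\<lambda>n. (if n \<in> A then 2 else 0) / (3::real) ^ Suc n)"
proof (rule summable_comparison_test')
  show "summable (\<lambda>n. 2 * (1/3::real) ^ Suc n)"
    by (intro summable_mult summable_geometric_iff[THEN iffD2] summable_Suc_iff[THEN iffD2]) auto
  show "norm ((if n \<in> A then 2 else 0) / (3::real) ^ Suc n) \<le> 2 * (1/3) ^ Suc n" for n
    by (auto simp: power_divide)
qed

lemma ternary_Suc: "ternary A = (if 0 \<in> A then 2/3 else 0) + ternary (Suc -` A) / 3"
proof -
  let ?f = "\<lambda>n. (if n \<in> A then 2 else 0) / (3::real) ^ Suc n"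
  have "(\<Sum>n. ?f (Suc n)) = suminf ?f - ?f 0"
    using suminf_split_head[OF summable_ternary[of A]] .
  moreover have "(\<Sum>n. ?f (Suc n)) = (\<Sum>n. (if Suc n \<in> A then 2 else 0) / (3::real) ^ Suc n) / 3"
    using suminf_divide[OF summable_ternary[of "Suc -` A"], of 3] by (simp add: field_simps)
  ultimately show ?thesis
    unfolding ternary_def by auto
qed

lemma ternary_nonneg: "0 \<le> ternary A"
  unfolding ternary_def by (intro suminf_nonneg summable_ternary) auto

lemma ternary_le_1: "ternary A \<le> 1"
proof -
  have "(\<lambda>n. (2/3) * (1/3::real) ^ n) sums ((2/3) * (3/2))"
    by (intro sums_mult) (use geometric_sums[of "1/3::real"] in simp)
  moreover have "(\<lambda>n. (2/3) * (1/3::real) ^ n) = (\<lambda>n. 2 * (1/3) ^ Suc n)"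
    by auto
  ultimately have geom: "(\<lambda>n. 2 * (1/3::real) ^ Suc n) sums 1"
    by simp
  have "ternary A \<le> (\<Sum>n. 2 * (1/3::real) ^ Suc n)"
    unfolding ternary_def
    by (intro suminf_le summable_ternary sums_summable[OF geom]) (auto simp: power_divide)
  then show ?thesis
    using sums_unique[OF geom] by simp
qed

lemma ternary_first_digit:
  shows "0 \<in> A \<Longrightarrow> 2/3 \<le> ternary A" and "0 \<notin> A \<Longrightarrow> ternary A \<le> 1/3"
  using ternary_Suc[of A] ternary_nonneg[of "Suc -` A"] ternary_le_1[of "Suc -` A"] by auto

fun ternary_prefix :: "nat \<Rightarrow> nat set \<Rightarrow> int" where
  "ternary_prefix 0 A = 0"
| "ternary_prefix (Suc n) A = 3 * ternary_prefix n A + (if n \<in> A then 2 else 0)"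

lemma ternary_prefix_cong: "(\<And>m. m < n \<Longrightarrow> m \<in> A \<longleftrightarrow> m \<in> A') \<Longrightarrow> ternary_prefix n A = ternary_prefix n A'"
  by (induction n) auto

lemma ternary_prefix_empty: "ternary_prefix n {} = 0"
  by (induction n) auto

lemma ternary_shift: "3 ^ n * ternary A = of_int (ternary_prefix n A) + ternary ((\<lambda>m. m + n) -` A)"
proof (induction n)
  case (Suc n)
  have "3 ^ Suc n * ternary A = 3 * (of_int (ternary_prefix n A) + ternary ((\<lambda>m. m + n) -` A))"
    using Suc by simp
  also have "ternary ((\<lambda>m. m + n) -` A) = (if n \<in> A then 2/3 else 0) + ternary ((\<lambda>m. m + Suc n) -` A) / 3"
    using ternary_Suc[of "(\<lambda>m. m + n) -` A"] by (simp add: vimage_def)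
  finally show ?case
    by (simp add: algebra_simps)
qed simp

lemma inj_ternary: "inj ternary"
proof (rule injI)
  fix A A' assume eq: "ternary A = ternary A'"
  have "\<forall>m<n. m \<in> A \<longleftrightarrow> m \<in> A'" for n
  proof (induction n)
    case (Suc n)
    then have "ternary_prefix n A = ternary_prefix n A'"
      by (intro ternary_prefix_cong) auto
    then have "ternary ((\<lambda>m. m + n) -` A) = ternary ((\<lambda>m. m + n) -` A')"
      using ternary_shift[of n A] ternary_shift[of n A'] eq by simp
    then have "n \<in> A \<longleftrightarrow> n \<in> A'"
      using ternary_first_digit[of "(\<lambda>m. m + n) -` A"] ternary_first_digit[of "(\<lambda>m. m + n) -` A'"]
      by (force simp: vimage_def)
    with Suc show ?case
      using less_Suc_eq by auto
  qed simp
  then show "A = A'"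
    by blast
qed

text \<open>The integer translates of the middle-thirds Cantor set.\<close>
definition cantor_set :: "real set" where
  "cantor_set = {x. \<forall>n::nat. \<forall>k::int. 1/6 \<le> \<bar>3 ^ n * x - of_int k - 1/2\<bar>}"

lemma ternary_in_cantor_set: "ternary A \<in> cantor_set"
  unfolding cantor_set_def
proof (intro CollectI allI)
  fix n :: nat and k :: int
  define t where "t = ternary ((\<lambda>m. m + n) -` A)"
  have t: "t \<le> 1/3 \<or> 2/3 \<le> t" "0 \<le> t" "t \<le> 1"
    unfolding t_def using ternary_first_digit ternary_nonneg ternary_le_1 by blast+
  have shift: "3 ^ n * ternary A - of_int k - 1/2 = of_int (ternary_prefix n A - k) + (t - 1/2)"
    using ternary_shift[of n A] by (simp add: t_def)
  have away: "1/6 \<le> \<bar>of_int j + (t - 1/2)\<bar>" for j :: int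
  proof (cases "j = 0")
    case False
    then have "1 \<le> \<bar>real_of_int j\<bar>"
      by linarith
    then show ?thesis
      using t by linarith
  qed (use t in auto)
  show "1/6 \<le> \<bar>3 ^ n * ternary A - of_int k - 1/2\<bar>"
    unfolding shift by (rule away)
qed

lemma closed_cantor_set: "closed cantor_set"
  unfolding cantor_set_def by (intro closed_Collect_all closed_Collect_le continuous_intros)

definition triadic_midpoints :: "real set" where
  "triadic_midpoints = {(of_int k + 1/2) / 3 ^ n | k n. True}"

lemma countable_triadic_midpoints: "countable triadic_midpoints"
proof -
  have "triadic_midpoints = (\<lambda>(k::int, n::nat). (of_int k + 1/2) / 3 ^ n) ` UNIV"
    unfolding triadic_midpoints_def by auto
  then show ?thesis
    by (metis countable_image countableI_type)
qed

lemma triadic_midpoints_cantor_set_disjoint: "triadic_midpoints \<inter> cantor_set = {}"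
proof -
  have "(of_int k + 1/2) / 3 ^ n \<notin> cantor_set" for k :: int and n :: nat
    unfolding cantor_set_def by (auto intro!: exI[of _ n] exI[of _ k])
  then show ?thesis
    unfolding triadic_midpoints_def by blast
qed

lemma triadic_midpoints_dense:
  assumes "open U" "U \<noteq> {}"
  obtains d where "d \<in> triadic_midpoints" "d \<in> U"
proof -
  obtain x e where "e > 0" "ball x e \<subseteq> U"
    using assms open_contains_ball by blast
  obtain n :: nat where "1/e < 3 ^ n"
    using real_arch_pow[of 3 "1/e"] by auto
  then have small: "1/2 / 3 ^ n < e"
    using \<open>e > 0\<close> by (simp add: field_simps)
  define k where "k = \<lfloor>3 ^ n * x\<rfloor>"
  define d where "d = (of_int k + 1/2) / (3::real) ^ n"
  have "of_int k \<le> 3 ^ n * x" "3 ^ n * x < of_int k + 1"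
    unfolding k_def by linarith+
  then have k: "\<bar>of_int k + 1/2 - 3 ^ n * x\<bar> \<le> 1/2"
    unfolding abs_le_iff by linarith
  have "\<bar>d - x\<bar> = \<bar>of_int k + 1/2 - 3 ^ n * x\<bar> / 3 ^ n"
    unfolding d_def by (simp add: field_simps)
  also have "\<dots> \<le> 1/2 / 3 ^ n"
    using k by (intro divide_right_mono) auto
  finally have "\<bar>d - x\<bar> \<le> 1/2 / 3 ^ n" .
  then have "d \<in> ball x e"
    using small by (simp add: dist_real_def)
  moreover have "d \<in> triadic_midpoints"
    unfolding triadic_midpoints_def d_def by blast
  ultimately show ?thesis
    using \<open>ball x e \<subseteq> U\<close> by (intro that) auto
qed

lemma interior_cantor_set: "interior cantor_set = {}"
proof (rule ccontr)
  assume "interior cantor_set \<noteq> {}"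
  then obtain d where "d \<in> triadic_midpoints" "d \<in> interior cantor_set"
    by (rule triadic_midpoints_dense[OF open_interior])
  then show False
    using triadic_midpoints_cantor_set_disjoint interior_subset by blast
qed

lemma open_Diff_cantor_set_nonempty:
  assumes "open U" "U \<noteq> {}"
  shows "U - cantor_set \<noteq> {}"
proof
  assume "U - cantor_set = {}"
  then have "U \<subseteq> interior cantor_set"
    by (intro interior_maximal assms(1)) blast
  then show False
    using assms(2) interior_cantor_set by blast
qed

lemma open_Diff_cantor_set_midpoints_nonempty:
  assumes "open U" "U \<noteq> {}"
  shows "U - (cantor_set \<union> triadic_midpoints) \<noteq> {}"
proof -
  obtain y where "y \<in> U - cantor_set"
    using open_Diff_cantor_set_nonempty[OF assms] by blast
  then obtain r where "r > 0" "ball y r \<subseteq> U - cantor_set"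
    using open_contains_ball_eq[OF open_Diff[OF assms(1) closed_cantor_set]] by blast
  moreover have "uncountable (ball y r)"
    using \<open>r > 0\<close> by (rule uncountable_ball)
  ultimately have "\<not> ball y r \<subseteq> triadic_midpoints"
    using countable_triadic_midpoints countable_subset by auto
  then show ?thesis
    using \<open>ball y r \<subseteq> U - cantor_set\<close> by auto
qed

section \<open>Topologies refined by an ideal\<close>

definition set_ideal :: "'a set set \<Rightarrow> bool" where
  "set_ideal \<J> \<longleftrightarrow> {} \<in> \<J> \<and> (\<forall>A\<in>\<J>. \<forall>B\<in>\<J>. A \<union> B \<in> \<J>) \<and> (\<forall>A\<in>\<J>. \<forall>B\<subseteq>A. B \<in> \<J>)"

text \<open>Keeping the dense set of triadic midpoints out of every member of the ideal is what keeps
  the refined topology separable and connected.\<close>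
definition admissible_ideal :: "real set set \<Rightarrow> bool" where
  "admissible_ideal \<C> \<longleftrightarrow> set_ideal \<C> \<and> (\<forall>C\<in>\<C>. C \<inter> triadic_midpoints = {})"

definition ideal_topology :: "real set set \<Rightarrow> real topology" where
  "ideal_topology \<C> = topology (\<lambda>V. \<forall>x\<in>V. \<exists>e>0. \<exists>C\<in>\<C>. ball x e - C \<subseteq> V)"

lemma istopology_ideal:
  assumes "set_ideal \<C>"
  shows "istopology (\<lambda>V. \<forall>x\<in>V. \<exists>e>0. \<exists>C\<in>\<C>. ball x e - C \<subseteq> V)"
  unfolding istopology_def
proof (intro conjI allI impI ballI)
  fix S T x
  assume S: "\<forall>x\<in>S. \<exists>e>0. \<exists>C\<in>\<C>. ball x e - C \<subseteq> S" and T: "\<forall>x\<in>T. \<exists>e>0. \<exists>C\<in>\<C>. ball x e - C \<subseteq> T"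
    and "x \<in> S \<inter> T"
  then obtain e1 C1 e2 C2 where "e1 > 0" "C1 \<in> \<C>" "ball x e1 - C1 \<subseteq> S"
    and "e2 > 0" "C2 \<in> \<C>" "ball x e2 - C2 \<subseteq> T"
    by blast
  moreover have "C1 \<union> C2 \<in> \<C>"
    using assms \<open>C1 \<in> \<C>\<close> \<open>C2 \<in> \<C>\<close> unfolding set_ideal_def by blast
  moreover have "ball x (min e1 e2) - (C1 \<union> C2) \<subseteq> S \<inter> T"
    using \<open>ball x e1 - C1 \<subseteq> S\<close> \<open>ball x e2 - C2 \<subseteq> T\<close> by auto
  ultimately show "\<exists>e>0. \<exists>C\<in>\<C>. ball x e - C \<subseteq> S \<inter> T"
    using \<open>e1 > 0\<close> \<open>e2 > 0\<close> by (intro exI[of _ "min e1 e2"] conjI bexI[of _ "C1 \<union> C2"]) auto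
next
  fix \<K> x
  assume "\<forall>S\<in>\<K>. \<forall>x\<in>S. \<exists>e>0. \<exists>C\<in>\<C>. ball x e - C \<subseteq> S" and "x \<in> \<Union>\<K>"
  then obtain S e C where "S \<in> \<K>" "e > 0" "C \<in> \<C>" "ball x e - C \<subseteq> S"
    by blast
  then show "\<exists>e>0. \<exists>C\<in>\<C>. ball x e - C \<subseteq> \<Union>\<K>"
    by blast
qed

lemma openin_ideal_topology:
  assumes "set_ideal \<C>"
  shows "openin (ideal_topology \<C>) V \<longleftrightarrow> (\<forall>x\<in>V. \<exists>e>0. \<exists>C\<in>\<C>. ball x e - C \<subseteq> V)"
  by (simp add: ideal_topology_def topology_inverse'[OF istopology_ideal[OF assms]])

lemma openin_ideal_topologyD:
  assumes "set_ideal \<C>" "openin (ideal_topology \<C>) V" "x \<in> V"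
  obtains e C where "e > 0" "C \<in> \<C>" "ball x e - C \<subseteq> V"
  using assms openin_ideal_topology by metis

lemma open_imp_openin_ideal_topology:
  assumes "set_ideal \<C>" "open S"
  shows "openin (ideal_topology \<C>) S"
  unfolding openin_ideal_topology[OF assms(1)]
proof
  fix x assume "x \<in> S"
  then obtain e where "e > 0" "ball x e \<subseteq> S"
    using assms(2) open_contains_ball by blast
  then show "\<exists>e>0. \<exists>C\<in>\<C>. ball x e - C \<subseteq> S"
    using assms(1) unfolding set_ideal_def by blast
qed

lemma topspace_ideal_topology: "set_ideal \<C> \<Longrightarrow> topspace (ideal_topology \<C>) = UNIV"
  using open_imp_openin_ideal_topology[of \<C> UNIV] openin_subset by auto

lemma continuous_map_ideal_topology_euclidean:
  "set_ideal \<C> \<Longrightarrow> continuous_map (ideal_topology \<C>) euclidean id"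
  unfolding continuous_map topspace_ideal_topology by (auto intro: open_imp_openin_ideal_topology)

lemma finer_than_euclidean_ideal_topology: "set_ideal \<C> \<Longrightarrow> finer_than_euclidean (ideal_topology \<C>)"
  unfolding finer_than_euclidean_def
  using topspace_ideal_topology open_imp_openin_ideal_topology by blast

lemma Hausdorff_space_finer_than_euclidean:
  assumes "finer_than_euclidean \<tau>"
  shows "Hausdorff_space \<tau>"
  unfolding Hausdorff_space_def
proof (intro allI impI)
  fix x y assume "x \<in> topspace \<tau> \<and> y \<in> topspace \<tau> \<and> x \<noteq> y"
  then obtain U V where "open U" "open V" "x \<in> U" "y \<in> V" "U \<inter> V = {}"
    using hausdorff[of x y] by auto
  moreover have "openin \<tau> U" "openin \<tau> V"
    using assms \<open>open U\<close> \<open>open V\<close> unfolding finer_than_euclidean_def by auto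
  ultimately show "\<exists>U V. openin \<tau> U \<and> openin \<tau> V \<and> x \<in> U \<and> y \<in> V \<and> disjnt U V"
    by (auto simp: disjnt_def)
qed

lemma nbhds_ideal_topology:
  assumes "set_ideal \<C>"
  shows "N \<in> nbhds (ideal_topology \<C>) x \<longleftrightarrow> (\<exists>e>0. \<exists>C\<in>\<C>. x \<notin> C \<and> ball x e - C \<subseteq> N)"
proof
  assume "N \<in> nbhds (ideal_topology \<C>) x"
  then obtain U where U: "openin (ideal_topology \<C>) U" "x \<in> U" "U \<subseteq> N"
    unfolding nbhds_def by blast
  then obtain e C where "e > 0" "C \<in> \<C>" "ball x e - C \<subseteq> U"
    using openin_ideal_topology[OF assms] by blast
  moreover have "C - {x} \<in> \<C>"
    using assms \<open>C \<in> \<C>\<close> unfolding set_ideal_def by blast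
  ultimately show "\<exists>e>0. \<exists>C\<in>\<C>. x \<notin> C \<and> ball x e - C \<subseteq> N"
    using U by (intro exI[of _ e] bexI[of _ "C - {x}"]) auto
next
  assume "\<exists>e>0. \<exists>C\<in>\<C>. x \<notin> C \<and> ball x e - C \<subseteq> N"
  then obtain e C where "e > 0" "C \<in> \<C>" "x \<notin> C" "ball x e - C \<subseteq> N"
    by blast
  moreover have "openin (ideal_topology \<C>) (ball x e - C)"
    unfolding openin_ideal_topology[OF assms]
    by (metis Diff_iff Diff_mono open_ball open_contains_ball_eq \<open>C \<in> \<C>\<close> order_refl)
  ultimately show "N \<in> nbhds (ideal_topology \<C>) x"
    unfolding nbhds_def by auto
qed

lemma separable_space_ideal_topology:
  assumes "admissible_ideal \<C>"
  shows "separable_space (ideal_topology \<C>)"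
proof -
  have \<C>: "set_ideal \<C>"
    using assms unfolding admissible_ideal_def by blast
  have "\<exists>d\<in>triadic_midpoints. d \<in> T" if T: "openin (ideal_topology \<C>) T" "x \<in> T" for x T
  proof -
    obtain e C where "e > 0" "C \<in> \<C>" "ball x e - C \<subseteq> T"
      using openin_ideal_topologyD[OF \<C> T] .
    moreover have "ball x e \<noteq> {}"
      using \<open>e > 0\<close> by simp
    then obtain d where "d \<in> triadic_midpoints" "d \<in> ball x e"
      by (rule triadic_midpoints_dense[OF open_ball])
    moreover have "d \<notin> C"
      using assms \<open>C \<in> \<C>\<close> \<open>d \<in> triadic_midpoints\<close> unfolding admissible_ideal_def by blast
    ultimately show ?thesis
      by blast
  qed
  then have "ideal_topology \<C> closure_of triadic_midpoints = topspace (ideal_topology \<C>)"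
    unfolding closure_of_def topspace_ideal_topology[OF \<C>] by blast
  then show ?thesis
    unfolding separable_space_def topspace_ideal_topology[OF \<C>]
    using countable_triadic_midpoints by blast
qed

text \<open>A point of I close to x but on the wrong side of the separation would produce a triadic
  midpoint between the two points that lies in both open sets.\<close>
lemma ideal_topology_separation_locally_euclidean:
  assumes \<C>: "admissible_ideal \<C>" and I: "connected I"
    and E1: "openin (ideal_topology \<C>) E1" and E2: "openin (ideal_topology \<C>) E2"
    and cover: "I \<subseteq> E1 \<union> E2" and disj: "E1 \<inter> E2 \<inter> I = {}" and x: "x \<in> E1" "x \<in> I"
  shows "\<exists>e>0. ball x e \<inter> I \<subseteq> E1"
proof -
  have ideal: "set_ideal \<C>" and avoid: "\<And>C. C \<in> \<C> \<Longrightarrow> C \<inter> triadic_midpoints = {}"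
    using \<C> unfolding admissible_ideal_def by blast+
  obtain e C where "e > 0" "C \<in> \<C>" and C: "ball x e - C \<subseteq> E1"
    using openin_ideal_topologyD[OF ideal E1 x(1)] .
  have "y \<in> E1" if y: "y \<in> ball x e" "y \<in> I" for y
  proof (rule ccontr)
    assume "y \<notin> E1"
    then have "y \<in> E2" "y \<noteq> x"
      using cover y x by auto
    then obtain d C' where "d > 0" "C' \<in> \<C>" and C': "ball y d - C' \<subseteq> E2"
      using openin_ideal_topologyD[OF ideal E2] by blast
    have "open (open_segment x y \<inter> ball y d)"
      by (auto simp: open_segment_eq_real_ivl)
    moreover have "y \<in> ball y d \<inter> closure (open_segment x y)"
      using \<open>y \<noteq> x\<close> \<open>d > 0\<close> by simp
    then have "open_segment x y \<inter> ball y d \<noteq> {}"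
      using open_Int_closure_eq_empty[OF open_ball, of y d "open_segment x y"]
      by (metis Int_commute empty_iff)
    ultimately obtain q where q: "q \<in> triadic_midpoints" "q \<in> open_segment x y" "q \<in> ball y d"
      using triadic_midpoints_dense by blast
    have "q \<notin> C" "q \<notin> C'"
      using q(1) avoid \<open>C \<in> \<C>\<close> \<open>C' \<in> \<C>\<close> by blast+
    moreover have "closed_segment x y \<subseteq> ball x e"
      using \<open>e > 0\<close> y(1) by (simp add: closed_segment_subset)
    moreover have "closed_segment x y \<subseteq> I"
      using x(2) y(2) I by (simp add: closed_segment_subset connected_convex_1)
    ultimately have "q \<in> E1 \<inter> E2 \<inter> I"
      using q C C' open_closed_segment by blast
    then show False
      using disj by blast
  qed
  then show ?thesis
    using \<open>e > 0\<close> by blast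
qed

lemma connectedin_ideal_topology:
  assumes \<C>: "admissible_ideal \<C>" and I: "connected I"
  shows "connectedin (ideal_topology \<C>) I"
proof -
  have ideal: "set_ideal \<C>"
    using \<C> unfolding admissible_ideal_def by blast
  have rel_open: "openin (top_of_set I) (E \<inter> I)"
    if sep: "openin (ideal_topology \<C>) E" "openin (ideal_topology \<C>) E'" "I \<subseteq> E \<union> E'" "E \<inter> E' \<inter> I = {}"
    for E E'
    unfolding openin_euclidean_subtopology_iff
  proof (intro conjI ballI)
    fix x assume "x \<in> E \<inter> I"
    then obtain e where "e > 0" "ball x e \<inter> I \<subseteq> E"
      using ideal_topology_separation_locally_euclidean[OF \<C> I sep, of x] by blast
    moreover have "x' \<in> E \<inter> I" if "x' \<in> I" "dist x' x < e" for x'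
      using that \<open>ball x e \<inter> I \<subseteq> E\<close> by (auto simp: dist_commute)
    ultimately show "\<exists>e>0. \<forall>x'\<in>I. dist x' x < e \<longrightarrow> x' \<in> E \<inter> I"
      by blast
  qed blast
  show ?thesis
    unfolding connectedin topspace_ideal_topology[OF ideal]
  proof (intro conjI notI subset_UNIV)
    assume "\<exists>E1 E2. openin (ideal_topology \<C>) E1 \<and> openin (ideal_topology \<C>) E2 \<and>
      I \<subseteq> E1 \<union> E2 \<and> E1 \<inter> E2 \<inter> I = {} \<and> E1 \<inter> I \<noteq> {} \<and> E2 \<inter> I \<noteq> {}"
    then obtain E1 E2 where E: "openin (ideal_topology \<C>) E1" "openin (ideal_topology \<C>) E2"
      "I \<subseteq> E1 \<union> E2" "E1 \<inter> E2 \<inter> I = {}" "E1 \<inter> I \<noteq> {}" "E2 \<inter> I \<noteq> {}"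
      by blast
    have "openin (top_of_set I) (E1 \<inter> I)" "openin (top_of_set I) (E2 \<inter> I)"
      using rel_open[of E1 E2] rel_open[of E2 E1] E by (auto simp: Un_commute Int_commute)
    moreover have "I \<subseteq> (E1 \<inter> I) \<union> (E2 \<inter> I)" "(E1 \<inter> I) \<inter> (E2 \<inter> I) = {}"
      using E(3,4) by auto
    ultimately show False
      using I E(5,6) unfolding connected_openin by blast
  qed
qed

lemma connected_space_ideal_topology:
  "admissible_ideal \<C> \<Longrightarrow> connected_space (ideal_topology \<C>)"
  using connectedin_ideal_topology[of \<C> UNIV] connectedin_topspace topspace_ideal_topology
  unfolding admissible_ideal_def by fastforce

text \<open>The neighbourhoods of x in \<tau> differ from the Euclidean ones on the side of y.\<close>
definition nonstandard_towards :: "real topology \<Rightarrow> real \<Rightarrow> real \<Rightarrow> bool" where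
  "nonstandard_towards \<tau> x y \<longleftrightarrow> (\<exists>N\<in>nbhds \<tau> x. x islimpt (open_segment x y - N))"

lemma nonstandard_towards_imp_Gamma:
  assumes "nonstandard_towards \<tau> x y"
  shows "x \<in> Gamma \<tau>"
proof -
  obtain N where N: "N \<in> nbhds \<tau> x" "x islimpt (open_segment x y - N)"
    using assms unfolding nonstandard_towards_def by blast
  have "N \<notin> nbhds euclidean x"
  proof
    assume "N \<in> nbhds euclidean x"
    then obtain U where "open U" "x \<in> U" "U \<subseteq> N"
      unfolding nbhds_def by auto
    then show False
      using N(2) unfolding islimpt_def by blast
  qed
  then show ?thesis
    unfolding Gamma_def using N(1) by blast
qed

lemma nonstandard_towards_ideal_topology:
  assumes "set_ideal \<C>"
  shows "nonstandard_towards (ideal_topology \<C>) x y \<longleftrightarrow> (\<exists>C\<in>\<C>. x islimpt (C \<inter> open_segment x y))"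
proof
  assume "nonstandard_towards (ideal_topology \<C>) x y"
  then obtain N where N: "N \<in> nbhds (ideal_topology \<C>) x" "x islimpt (open_segment x y - N)"
    unfolding nonstandard_towards_def by blast
  then obtain e C where "e > 0" "C \<in> \<C>" "ball x e - C \<subseteq> N"
    using nbhds_ideal_topology[OF assms] by blast
  then have "open_segment x y - N \<subseteq> (C \<inter> open_segment x y) \<union> - ball x e"
    by blast
  moreover have "\<not> x islimpt - ball x e"
    using closed_limpt[of "- ball x e"] \<open>e > 0\<close> by auto
  ultimately show "\<exists>C\<in>\<C>. x islimpt (C \<inter> open_segment x y)"
    using N(2) \<open>C \<in> \<C>\<close> islimpt_subset islimpt_Un by metis
next
  assume "\<exists>C\<in>\<C>. x islimpt (C \<inter> open_segment x y)"
  then obtain C where "C \<in> \<C>" and C: "x islimpt (C \<inter> open_segment x y)"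
    by blast
  have "C - {x} \<in> \<C>"
    using assms \<open>C \<in> \<C>\<close> unfolding set_ideal_def by blast
  then have "ball x 1 - (C - {x}) \<in> nbhds (ideal_topology \<C>) x"
    by (intro iffD2[OF nbhds_ideal_topology[OF assms]] exI[of _ 1] conjI bexI[of _ "C - {x}"]) auto
  moreover have "x islimpt (C \<inter> open_segment x y \<inter> ball x 1)"
    using islimpt_Int_eventually[OF C eventually_at_in_open'[of "ball x 1" x]] by simp
  then have "x islimpt (open_segment x y - (ball x 1 - (C - {x})))"
    by (rule islimpt_subset) (auto simp: open_segment_def)
  ultimately show "nonstandard_towards (ideal_topology \<C>) x y"
    unfolding nonstandard_towards_def by blast
qed

section \<open>Embeddings between ideal topologies\<close>

lemma nbhds_vimage_continuous_map:
  assumes "continuous_map X Y f" "x \<in> topspace X" "M \<in> nbhds Y (f x)"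
  shows "f -` M \<in> nbhds X x"
proof -
  obtain V where "openin Y V" "f x \<in> V" "V \<subseteq> M"
    using assms(3) unfolding nbhds_def by blast
  moreover have "openin X {u \<in> topspace X. f u \<in> V}"
    using openin_continuous_map_preimage[OF assms(1) \<open>openin Y V\<close>] .
  ultimately show ?thesis
    unfolding nbhds_def using assms(2) by (intro CollectI exI[of _ "{u \<in> topspace X. f u \<in> V}"]) auto
qed

lemma nbhds_image_homeomorphic_maps:
  assumes "homeomorphic_maps X (subtopology Y S) f g" "openin Y S" "N \<in> nbhds X x"
  shows "f ` N \<in> nbhds Y (f x)"
proof -
  obtain U where U: "openin X U" "x \<in> U" "U \<subseteq> N"
    using assms(3) unfolding nbhds_def by blast
  have "homeomorphic_map X (subtopology Y S) f"
    using assms(1) homeomorphic_map_maps by blast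
  then have "openin (subtopology Y S) (f ` U)"
    using homeomorphic_map_openness openin_subset[OF U(1)] U(1) by blast
  then have "openin Y (f ` U)"
    using assms(2) by (rule openin_trans_full)
  then show ?thesis
    unfolding nbhds_def using U by (intro CollectI exI[of _ "f ` U"]) auto
qed

lemma inj_connected_image_no_peak:
  fixes h :: "real \<Rightarrow> real"
  assumes inj: "inj h" and conn: "\<And>a b. connected (h ` {a..b})" and "a < b" "b < c"
  shows "\<not> (h a < h b \<and> h c < h b)"
proof
  assume peak: "h a < h b \<and> h c < h b"
  define v where "v = (max (h a) (h c) + h b) / 2"
  have v: "h a \<le> v" "h c \<le> v" "v < h b"
    using peak by (auto simp: v_def)
  have "v \<in> h ` {a..b}"
    by (rule connectedD_interval[OF conn[of a b], of "h a" "h b"]) (use \<open>a < b\<close> v in auto)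
  then obtain s where s: "s \<in> {a..b}" "h s = v"
    by blast
  have "v \<in> h ` {b..c}"
    by (rule connectedD_interval[OF conn[of b c], of "h c" "h b"]) (use \<open>b < c\<close> v in auto)
  then obtain t where t: "t \<in> {b..c}" "h t = v"
    by blast
  have "s \<noteq> b" "t \<noteq> b"
    using s(2) t(2) v(3) by auto
  then have "s < b" "b < t"
    using s(1) t(1) by (simp_all add: less_le)
  then have "h s \<noteq> h t"
    by (simp add: inj_eq[OF inj])
  then show False
    using s t by simp
qed

lemma inj_connected_image_between:
  fixes h :: "real \<Rightarrow> real"
  assumes inj: "inj h" and conn: "\<And>a b. connected (h ` {a..b})" and "a < b" "b < c"
  shows "(h a < h b \<longleftrightarrow> h b < h c) \<and> (h a < h b \<longleftrightarrow> h a < h c)"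
proof -
  have "inj (\<lambda>x. - h x)"
    using inj by (simp add: inj_def)
  moreover have "connected ((\<lambda>x. - h x) ` {a..b})" for a b
    using connected_continuous_image[OF continuous_on_minus[OF continuous_on_id] conn[of a b]]
    by (simp add: image_image)
  ultimately have "\<not> (h b < h a \<and> h b < h c)"
    using inj_connected_image_no_peak[of "\<lambda>x. - h x" a b c] assms(3,4) by auto
  moreover have "\<not> (h a < h b \<and> h c < h b)"
    by (rule inj_connected_image_no_peak[OF inj conn assms(3,4)])
  moreover have "h a \<noteq> h b" "h b \<noteq> h c" "h a \<noteq> h c"
    using assms(3,4) by (simp_all add: inj_eq[OF inj])
  ultimately show ?thesis
    by auto
qed

lemma inj_connected_image_order:
  fixes h :: "real \<Rightarrow> real"
  assumes inj: "inj h" and conn: "\<And>a b. connected (h ` {a..b})" and "x < y"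
  shows "h x < h y \<longleftrightarrow> h 0 < h 1"
proof -
  note between = inj_connected_image_between[OF inj conn]
  define m where "m = min x 0 - 1"
  have m: "m < x" "m < 0" "m < 1"
    unfolding m_def by auto
  have base: "h m < h z \<longleftrightarrow> h m < h 1" if "m < z" for z
    using between[of m z 1] between[of m 1 z] \<open>m < 1\<close> that by (cases z "1::real" rule: linorder_cases) auto
  have "h x < h y \<longleftrightarrow> h m < h y"
    using between[of m x y] m \<open>x < y\<close> by blast
  also have "\<dots> \<longleftrightarrow> h m < h 1"
    by (rule base) (use m(1) \<open>x < y\<close> in linarith)
  also have "\<dots> \<longleftrightarrow> h 0 < h 1"
    using between[of m 0 1] m by auto
  finally show ?thesis .
qed

lemma inj_connected_image_continuous:
  fixes h :: "real \<Rightarrow> real"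
  assumes inj: "inj h" and conn: "\<And>a b. connected (h ` {a..b})"
  shows "open (range h)" and "continuous_on UNIV h"
proof -
  note order = inj_connected_image_order[OF inj conn]
  show opn: "open (range h)"
    unfolding open_subopen[of "range h"]
  proof
    fix v assume "v \<in> range h"
    then obtain x where v: "v = h x"
      by blast
    define a where "a = min (h (x - 1)) (h (x + 1))"
    define b where "b = max (h (x - 1)) (h (x + 1))"
    have "h (x - 1) \<noteq> h x" "h x \<noteq> h (x + 1)"
      by (simp_all add: inj_eq[OF inj])
    then have "a < v" "v < b"
      using order[of "x - 1" x] order[of x "x + 1"] unfolding a_def b_def v by auto
    moreover have "{a<..<b} \<subseteq> h ` {x - 1..x + 1}"
    proof
      fix z assume "z \<in> {a<..<b}"
      moreover have "a \<in> h ` {x - 1..x + 1}" "b \<in> h ` {x - 1..x + 1}"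
        unfolding a_def b_def by (auto simp: min_def max_def)
      ultimately show "z \<in> h ` {x - 1..x + 1}"
        using connectedD_interval[OF conn[of "x - 1" "x + 1"], of a b z] by auto
    qed
    ultimately show "\<exists>T. open T \<and> v \<in> T \<and> T \<subseteq> range h"
      by (intro exI[of _ "{a<..<b}"]) auto
  qed
  show "continuous_on UNIV h"
  proof (cases "h 0 < h 1")
    case True
    then have "h x \<le> h y" if "x \<le> y" for x y
      using order[of x y] that by (cases "x = y") auto
    then show ?thesis
      using opn by (intro continuous_onI_mono) auto
  next
    case False
    then have "- h x \<le> - h y" if "x \<le> y" for x y
      using order[of x y] that by (cases "x = y") auto
    moreover have "open (range (\<lambda>x. - h x))"
      using open_negations[OF opn] by (simp add: image_image)
    ultimately have "continuous_on UNIV (\<lambda>x. - h x)"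
      by (intro continuous_onI_mono) auto
    then show ?thesis
      using continuous_on_minus[of UNIV "\<lambda>x. - h x"] by simp
  qed
qed

lemma continuous_inj_image_open_segment:
  fixes h :: "real \<Rightarrow> real"
  assumes "continuous_on UNIV h" "inj h"
  shows "h ` open_segment x y = open_segment (h x) (h y)"
  by (intro continuous_injective_image_open_segment_1 continuous_on_subset[OF assms(1)]
      inj_on_subset[OF assms(2)]) auto

lemma nonstandard_towards_image:
  fixes h :: "real \<Rightarrow> real"
  assumes cont: "continuous_on UNIV h" and inj: "inj h"
    and img: "\<And>N. N \<in> nbhds \<sigma> x \<Longrightarrow> h ` N \<in> nbhds \<tau> (h x)"
    and "nonstandard_towards \<sigma> x y"
  shows "nonstandard_towards \<tau> (h x) (h y)"
proof -
  obtain N where N: "N \<in> nbhds \<sigma> x" "x islimpt (open_segment x y - N)"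
    using assms(4) unfolding nonstandard_towards_def by blast
  have "isCont h x"
    using cont continuous_on_eq_continuous_at by blast
  moreover have "eventually (\<lambda>z. h z \<noteq> h x) (at x)"
    by (simp add: eventually_at_filter inj_eq[OF inj])
  ultimately have "h x islimpt h ` (open_segment x y - N)"
    by (rule islimpt_isCont_image[OF N(2)])
  moreover have "h ` (open_segment x y - N) = open_segment (h x) (h y) - h ` N"
    using continuous_inj_image_open_segment[OF cont inj] inj by (simp add: image_set_diff)
  ultimately show ?thesis
    unfolding nonstandard_towards_def using img[OF N(1)] by auto
qed

lemma nonstandard_towards_vimage:
  fixes h k :: "real \<Rightarrow> real"
  assumes cont: "continuous_on UNIV h" and inv: "\<And>z. k (h z) = z" and opn: "open (range h)"
    and pre: "\<And>M. M \<in> nbhds \<tau> (h x) \<Longrightarrow> h -` M \<in> nbhds \<sigma> x"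
    and "nonstandard_towards \<tau> (h x) (h y)"
  shows "nonstandard_towards \<sigma> x y"
proof -
  obtain M where M: "M \<in> nbhds \<tau> (h x)" "h x islimpt (open_segment (h x) (h y) - M)"
    using assms(5) unfolding nonstandard_towards_def by blast
  have isCont: "isCont h z" for z
    using cont continuous_on_eq_continuous_at by blast
  have "isCont k (h x)"
    by (rule isCont_inverse_function[where d=1]) (auto simp: inv isCont)
  moreover have "eventually (\<lambda>w. k w \<noteq> k (h x)) (at (h x))"
    using eventually_at_in_open[OF opn, of "h x"] by (rule eventually_mono) (auto simp: inv)
  ultimately have "k (h x) islimpt k ` (open_segment (h x) (h y) - M)"
    by (rule islimpt_isCont_image[OF M(2)])
  moreover have "inj h"
    using inv by (metis injI)
  then have "open_segment (h x) (h y) - M = h ` (open_segment x y - h -` M)"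
    using continuous_inj_image_open_segment[OF cont, of x y] by auto
  then have "k ` (open_segment (h x) (h y) - M) = open_segment x y - h -` M"
    by (simp add: image_image inv)
  ultimately show ?thesis
    unfolding nonstandard_towards_def using pre[OF M(1)] inv by auto
qed

lemma ideal_topology_embedding:
  assumes \<C>1: "admissible_ideal \<C>1" and \<C>2: "admissible_ideal \<C>2"
    and hk: "homeomorphic_maps (ideal_topology \<C>1) (subtopology (ideal_topology \<C>2) S) h k"
  shows "range h = S" and "\<And>x. k (h x) = x" and "continuous_on UNIV h"
    and "\<And>x y. x < y \<Longrightarrow> h x < h y \<longleftrightarrow> h 0 < h 1"
    and "\<And>x y. nonstandard_towards (ideal_topology \<C>1) x y \<longleftrightarrow>
      nonstandard_towards (ideal_topology \<C>2) (h x) (h y)"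
proof -
  have ideal1: "set_ideal \<C>1" and ideal2: "set_ideal \<C>2"
    using \<C>1 \<C>2 unfolding admissible_ideal_def by blast+
  note top1 = topspace_ideal_topology[OF ideal1] and top2 = topspace_ideal_topology[OF ideal2]
  have ch: "continuous_map (ideal_topology \<C>1) (subtopology (ideal_topology \<C>2) S) h"
    and kh: "\<And>x. k (h x) = x" and hk': "\<And>y. y \<in> S \<Longrightarrow> h (k y) = y"
    using hk unfolding homeomorphic_maps_def top1 topspace_subtopology top2 by auto
  show "k (h x) = x" for x
    by (rule kh)
  have hS: "h x \<in> S" for x
    using continuous_map_image_subset_topspace[OF ch] unfolding top1 topspace_subtopology top2 by auto
  show rng: "range h = S"
  proof
    show "S \<subseteq> range h"
      using hk' by (metis image_eqI subsetI UNIV_I)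
  qed (use hS in auto)
  have ch2: "continuous_map (ideal_topology \<C>1) (ideal_topology \<C>2) h"
    using ch continuous_map_in_subtopology by blast
  have "continuous_map (ideal_topology \<C>1) euclidean h"
    using continuous_map_compose[OF ch2 continuous_map_ideal_topology_euclidean[OF ideal2]]
    by (simp add: o_def id_def)
  then have darboux: "connected (h ` {a..b})" for a b
    using connectedin_continuous_map_image connectedin_ideal_topology[OF \<C>1 connected_Icc] by fastforce
  have inj: "inj h"
    using kh by (metis injI)
  note cont = inj_connected_image_continuous[OF inj darboux]
  show "continuous_on UNIV h"
    by (rule cont(2))
  show "x < y \<Longrightarrow> h x < h y \<longleftrightarrow> h 0 < h 1" for x y
    by (rule inj_connected_image_order[OF inj darboux])
  have "openin (ideal_topology \<C>2) S"
    using open_imp_openin_ideal_topology[OF ideal2 cont(1)] rng by simp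
  then have img: "h ` N \<in> nbhds (ideal_topology \<C>2) (h x)" if "N \<in> nbhds (ideal_topology \<C>1) x" for N x
    using nbhds_image_homeomorphic_maps[OF hk _ that] by blast
  have pre: "h -` M \<in> nbhds (ideal_topology \<C>1) x" if "M \<in> nbhds (ideal_topology \<C>2) (h x)" for M x
    using nbhds_vimage_continuous_map[OF ch2 _ that] top1 by simp
  show "nonstandard_towards (ideal_topology \<C>1) x y \<longleftrightarrow>
      nonstandard_towards (ideal_topology \<C>2) (h x) (h y)" for x y
    using nonstandard_towards_image[OF cont(2) inj img] nonstandard_towards_vimage[OF cont(2) kh cont(1) pre]
    by blast
qed

section \<open>Diagonalisation against continuum many maps\<close>

unbundle cardinal_syntax

lemma exists_avoiding_small_set:
  assumes inf: "infinite (UNIV :: 'a set)" and small: "|Z| <o |UNIV :: 'a set|"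
    and big: "(UNIV :: 'a set) \<lesssim> M" and inj: "inj_on f M"
  shows "\<exists>x\<in>M. x \<notin> Z \<and> f x \<notin> Z"
proof (rule ccontr)
  assume "\<not> ?thesis"
  then have sub: "M \<subseteq> Z \<union> (M \<inter> f -` Z)"
    by blast
  have "|M \<inter> f -` Z| \<le>o |Z|"
    unfolding card_of_ordLeq[symmetric]
    by (intro exI[of _ f] conjI inj_on_subset[OF inj]) auto
  then have "|M \<inter> f -` Z| <o |UNIV :: 'a set|"
    using small ordLeq_ordLess_trans by blast
  then have "|Z \<union> (M \<inter> f -` Z)| <o |UNIV :: 'a set|"
    using card_of_Un_ordLess_infinite[OF inf small] by blast
  then have "|M| <o |UNIV :: 'a set|"
    using card_of_mono1[OF sub] ordLeq_ordLess_trans by blast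
  moreover have "|UNIV :: 'a set| \<le>o |M|"
    using big unfolding lepoll_def card_of_ordLeq .
  ultimately show False
    using not_ordLess_ordLeq by blast
qed

lemma card_of_underS_less_UNIV:
  assumes "F \<lesssim> (UNIV :: 'a set)" "f \<in> F"
  shows "|underS |F| f| <o |UNIV :: 'a set|"
proof -
  have "|underS |F| f| <o |F|"
    by (rule card_of_underS[OF card_of_Card_order]) (simp add: Field_card_of assms(2))
  moreover have "|F| \<le>o |UNIV :: 'a set|"
    using assms(1) unfolding lepoll_def card_of_ordLeq .
  ultimately show ?thesis
    using ordLess_ordLeq_trans by blast
qed

text \<open>Transfinite recursion along a well-order of F of minimal order type: before stage f fewer
  than |UNIV| points have been used, so a fresh pair x, f x can be chosen.\<close>
lemma exists_disjoint_moved_pairs: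
  fixes F :: "('a \<Rightarrow> 'a) set" and M :: "('a \<Rightarrow> 'a) \<Rightarrow> 'a set"
  assumes inf: "infinite (UNIV :: 'a set)" and card: "F \<lesssim> (UNIV :: 'a set)"
    and big: "\<And>f. f \<in> F \<Longrightarrow> (UNIV :: 'a set) \<lesssim> M f"
    and inj: "\<And>f. f \<in> F \<Longrightarrow> inj_on f (M f)"
    and moves: "\<And>f x. f \<in> F \<Longrightarrow> x \<in> M f \<Longrightarrow> f x \<noteq> x"
  shows "\<exists>pt. \<forall>f\<in>F. pt f \<in> M f \<and> (\<forall>j\<in>F. j \<noteq> f \<longrightarrow> {pt j, j (pt j)} \<inter> {pt f, f (pt f)} = {})"
proof -
  define r where "r = |F|"
  define used where "used g f = g ` underS r f \<union> (\<lambda>j. j (g j)) ` underS r f"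
    for g :: "('a \<Rightarrow> 'a) \<Rightarrow> 'a" and f
  have fresh: "\<exists>x. x \<in> M f \<and> x \<notin> used g f \<and> f x \<notin> used g f" if "f \<in> F" for g f
  proof -
    have "|g ` underS r f| <o |UNIV :: 'a set|" "|(\<lambda>j. j (g j)) ` underS r f| <o |UNIV :: 'a set|"
      using card_of_image ordLeq_ordLess_trans card_of_underS_less_UNIV[OF card that]
      unfolding r_def by blast+
    then have "|used g f| <o |UNIV :: 'a set|"
      unfolding used_def using card_of_Un_ordLess_infinite[OF inf] by blast
    then show ?thesis
      using exists_avoiding_small_set[OF inf _ big[OF that] inj[OF that]] by blast
  qed
  define H where "H g f = (SOME x. x \<in> M f \<and> x \<notin> used g f \<and> f x \<notin> used g f)" for g f
  have Wr: "Well_order r" and Fr: "Field r = F"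
    unfolding r_def by (rule card_of_Well_order, rule Field_card_of)
  then have wf: "wf (r - Id)"
    using wo_rel.WF wo_rel_def by blast
  define pt where "pt = wfrec (r - Id) H"
  have "used (cut pt (r - Id) f) f = used pt f" for f
    unfolding used_def underS_def cut_def by (auto simp: image_def)
  then have "pt f = H pt f" for f
    unfolding pt_def using wfrec[OF wf, of H f] unfolding H_def by simp
  then have pt: "pt f \<in> M f \<and> pt f \<notin> used pt f \<and> f (pt f) \<notin> used pt f" if "f \<in> F" for f
    unfolding H_def using someI_ex[OF fresh[OF that]] by simp
  have earlier: "{pt j, j (pt j)} \<inter> {pt f, f (pt f)} = {}"
    if "j \<in> F" "f \<in> F" "(j, f) \<in> r" "j \<noteq> f" for j f
  proof -
    have "j \<in> underS r f"
      using that unfolding underS_def by auto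
    then have "{pt j, j (pt j)} \<subseteq> used pt f"
      unfolding used_def by blast
    moreover have "pt j \<in> M j"
      using pt[OF that(1)] by simp
    then have "pt j \<noteq> j (pt j)"
      using moves[OF that(1)] by metis
    ultimately show ?thesis
      using pt[OF that(2)] by auto
  qed
  have "{pt j, j (pt j)} \<inter> {pt f, f (pt f)} = {}" if "j \<in> F" "f \<in> F" "j \<noteq> f" for j f
    using wo_rel.TOTALS[of r] Wr Fr that earlier[of j f] earlier[of f j]
    unfolding wo_rel_def by blast
  then show ?thesis
    using pt by (intro exI[of _ pt]) blast
qed

lemma transfinite_diagonal_set:
  fixes F :: "('a \<Rightarrow> 'a) set" and M :: "('a \<Rightarrow> 'a) \<Rightarrow> 'a set" and P :: "('a \<Rightarrow> 'a) \<Rightarrow> bool"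
  assumes inf: "infinite (UNIV :: 'a set)" and card: "F \<lesssim> (UNIV :: 'a set)"
    and big: "\<And>f. f \<in> F \<Longrightarrow> (UNIV :: 'a set) \<lesssim> M f"
    and inj: "\<And>f. f \<in> F \<Longrightarrow> inj_on f (M f)"
    and moves: "\<And>f x. f \<in> F \<Longrightarrow> x \<in> M f \<Longrightarrow> f x \<noteq> x"
  shows "\<exists>B. \<forall>f\<in>F. \<exists>x\<in>M f. x \<in> B \<longleftrightarrow> (f x \<in> B \<longleftrightarrow> P f)"
proof -
  have "\<exists>pt. \<forall>f\<in>F. pt f \<in> M f \<and> (\<forall>j\<in>F. j \<noteq> f \<longrightarrow> {pt j, j (pt j)} \<inter> {pt f, f (pt f)} = {})"
    by (rule exists_disjoint_moved_pairs) (fact inf card big inj moves)+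
  then obtain pt where pt: "\<And>f. f \<in> F \<Longrightarrow> pt f \<in> M f"
    and disjoint: "\<And>f j. f \<in> F \<Longrightarrow> j \<in> F \<Longrightarrow> j \<noteq> f \<Longrightarrow> {pt j, j (pt j)} \<inter> {pt f, f (pt f)} = {}"
    by blast
  define B where "B = pt ` F \<union> {j (pt j) | j. j \<in> F \<and> P j}"
  have "pt f \<in> B \<longleftrightarrow> (f (pt f) \<in> B \<longleftrightarrow> P f)" if f: "f \<in> F" for f
  proof -
    have "f (pt f) \<in> B \<Longrightarrow> P f"
      using disjoint[OF f] moves[OF f pt[OF f]] unfolding B_def by blast
    then show ?thesis
      using f unfolding B_def by blast
  qed
  then show ?thesis
    using pt by blast
qed

definition real_code :: "real \<Rightarrow> nat set" where
  "real_code = (SOME g. inj g)"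

lemma inj_real_code: "inj real_code"
proof -
  have "\<exists>g :: real \<Rightarrow> nat set. inj g"
    using eqpoll_sym[OF nat_sets_eqpoll_reals] unfolding eqpoll_def bij_betw_def by blast
  then show ?thesis
    unfolding real_code_def by (rule someI_ex)
qed

definition seq_code :: "(nat \<Rightarrow> nat set) \<Rightarrow> nat set" where
  "seq_code u = {prod_encode (i, m) | i m. m \<in> u i}"

lemma prod_encode_in_seq_code: "prod_encode (i, m) \<in> seq_code u \<longleftrightarrow> m \<in> u i"
  unfolding seq_code_def by auto

lemma inj_seq_code: "inj seq_code"
proof (rule injI)
  fix u v assume "seq_code u = seq_code v"
  then have "m \<in> u i \<longleftrightarrow> m \<in> v i" for i m
    using prod_encode_in_seq_code by metis
  then show "u = v"
    by blast
qed

lemma nat_fun_reals_lepoll_reals: "(UNIV :: (nat \<Rightarrow> real) set) \<lesssim> (UNIV :: real set)"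
proof -
  have "inj (\<lambda>w. seq_code (real_code \<circ> w))"
    by (intro injI ext) (metis comp_apply inj_seq_code inj_real_code injD)
  then have "(UNIV :: (nat \<Rightarrow> real) set) \<lesssim> (UNIV :: nat set set)"
    unfolding lepoll_def by blast
  also have "\<dots> \<approx> (UNIV :: real set)"
    by (rule nat_sets_eqpoll_reals)
  finally show ?thesis .
qed

lemma continuous_functions_lepoll_reals:
  "{f :: real \<Rightarrow> real. continuous_on UNIV f} \<lesssim> (UNIV :: real set)"
proof -
  have "inj_on (\<lambda>f n. f (of_rat (from_nat n))) {f :: real \<Rightarrow> real. continuous_on UNIV f}"
  proof (rule inj_onI)
    fix f g :: "real \<Rightarrow> real"
    assume f: "f \<in> {f. continuous_on UNIV f}" and g: "g \<in> {f. continuous_on UNIV f}"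
      and eq: "(\<lambda>n. f (of_rat (from_nat n))) = (\<lambda>n. g (of_rat (from_nat n)))"
    have "f x - g x = 0" for x
    proof (rule continuous_constant_on_closure[of \<rat> "\<lambda>x. f x - g x"])
      show "continuous_on (closure \<rat>) (\<lambda>x. f x - g x)"
        using f g by (simp add: Rats_closure_real continuous_on_diff)
      show "f q - g q = 0" if "q \<in> \<rat>" for q
      proof -
        obtain r where "q = of_rat r"
          using \<open>q \<in> \<rat>\<close> by (auto elim: Rats_cases)
        then show ?thesis
          using fun_cong[OF eq, of "to_nat r"] by simp
      qed
    qed (simp add: Rats_closure_real)
    then show "f = g"
      by auto
  qed
  then have "{f :: real \<Rightarrow> real. continuous_on UNIV f} \<lesssim> (UNIV :: (nat \<Rightarrow> real) set)"
    unfolding lepoll_def by blast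
  then show ?thesis
    using nat_fun_reals_lepoll_reals lepoll_trans by blast
qed

section \<open>Prescribing the non-Euclidean sides\<close>

lemma islimpt_range_shells:
  fixes c :: "nat \<Rightarrow> 'a::metric_space"
  assumes lower: "\<And>n. d / (real n + 2) < dist (c n) x"
    and upper: "\<And>n. dist (c n) x < d / (real n + 1)"
  shows "x islimpt range c" and "z islimpt range c \<Longrightarrow> z = x"
proof -
  have "0 \<le> dist (c 0) x" "dist (c 0) x < d"
    using upper[of 0] by simp_all
  then have "d > 0"
    by linarith
  have tail_finite: "finite (range c \<inter> {z. e \<le> dist z x})" if "e > 0" for e
  proof -
    obtain N :: nat where N: "d / e < N"
      using reals_Archimedean2 by blast
    have "range c \<inter> {z. e \<le> dist z x} \<subseteq> c ` {..<N}"
    proof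
      fix z assume "z \<in> range c \<inter> {z. e \<le> dist z x}"
      then obtain n where n: "z = c n" "e \<le> dist (c n) x"
        by auto
      then have "e < d / (real n + 1)"
        using upper[of n] by linarith
      then have "real n + 1 < d / e"
        using \<open>e > 0\<close> by (simp add: field_simps)
      then have "real n < real N"
        using N by linarith
      then show "z \<in> c ` {..<N}"
        using n(1) by simp
    qed
    then show ?thesis
      using finite_subset by blast
  qed
  show "x islimpt range c"
    unfolding islimpt_approachable
  proof (intro allI impI)
    fix e :: real assume "e > 0"
    obtain n :: nat where "d / e < n"
      using reals_Archimedean2 by blast
    then have "d < (real n + 1) * e"
      using \<open>e > 0\<close> by (simp add: field_simps)
    then have "d / (real n + 1) < e"
      by (simp add: field_simps)
    moreover have "0 < d / (real n + 2)"
      using \<open>d > 0\<close> by simp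
    ultimately show "\<exists>x'\<in>range c. x' \<noteq> x \<and> dist x' x < e"
      using lower[of n] upper[of n] by (intro bexI[of _ "c n"]) auto
  qed
  show "z = x" if "z islimpt range c"
  proof (rule ccontr)
    assume "z \<noteq> x"
    define e where "e = dist z x / 2"
    have "e > 0"
      using \<open>z \<noteq> x\<close> by (simp add: e_def)
    have "open {w. e < dist w x}"
      by (intro open_Collect_less continuous_intros)
    moreover have "z \<in> {w. e < dist w x}"
      using \<open>e > 0\<close> by (simp add: e_def)
    ultimately have "z islimpt (range c \<inter> {w. e < dist w x})"
      by (intro islimpt_Int_eventually[OF that] eventually_at_in_open')
    moreover have "finite (range c \<inter> {w. e < dist w x})"
      using tail_finite[OF \<open>e > 0\<close>] by (rule finite_subset[rotated]) auto
    ultimately show False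
      using islimpt_finite by blast
  qed
qed

lemma exists_sequence_towards:
  fixes x y :: real
  assumes "y \<noteq> x"
  obtains R where "R \<subseteq> open_segment x y" "R \<inter> (cantor_set \<union> triadic_midpoints) = {}"
    and "x islimpt R" and "\<And>z. z islimpt R \<Longrightarrow> z = x"
proof -
  define d where "d = dist x y"
  have "d > 0"
    using assms by (simp add: d_def)
  define U where "U n = open_segment x y \<inter> {z. d / (real n + 2) < dist z x} \<inter> {z. dist z x < d / (real n + 1)}"
    for n :: nat
  have "U n - (cantor_set \<union> triadic_midpoints) \<noteq> {}" for n
  proof (rule open_Diff_cantor_set_midpoints_nonempty)
    show "open (U n)"
      unfolding U_def
      by (intro open_Int open_Collect_less continuous_intros) (auto simp: open_segment_eq_real_ivl)
    define a b :: real where "a = 1 / (real n + 2)" and "b = 1 / (real n + 1)"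
    have ab: "0 < a" "a < b" "b \<le> 1"
      unfolding a_def b_def by (auto simp: frac_less2)
    define t where "t = (a + b) / 2"
    have t: "a < t" "t < b" "0 < t" "t < 1"
      using ab unfolding t_def by auto
    have "dist (x + t * (y - x)) x = t * d"
      using t(3) by (simp add: d_def dist_real_def abs_mult abs_minus_commute)
    moreover have "d / (real n + 2) = a * d" "d / (real n + 1) = b * d"
      unfolding a_def b_def by simp_all
    moreover have "a * d < t * d" "t * d < b * d"
      using t(1,2) \<open>d > 0\<close> by simp_all
    moreover have "x + t * (y - x) \<in> open_segment x y"
      using assms t(3,4) by (auto simp: in_segment algebra_simps intro!: exI[of _ t])
    ultimately have "x + t * (y - x) \<in> U n"
      unfolding U_def by simp
    then show "U n \<noteq> {}"
      by blast
  qed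
  then have "\<forall>n. \<exists>z. z \<in> U n - (cantor_set \<union> triadic_midpoints)"
    by blast
  then obtain c where c: "\<And>n. c n \<in> U n - (cantor_set \<union> triadic_midpoints)"
    by metis
  have "d / (real n + 2) < dist (c n) x" "dist (c n) x < d / (real n + 1)" for n
    using c[of n] unfolding U_def by (auto simp: add.commute)
  note shells = islimpt_range_shells[OF this]
  show ?thesis
  proof (rule that)
    show "range c \<subseteq> open_segment x y" "range c \<inter> (cantor_set \<union> triadic_midpoints) = {}"
      using c unfolding U_def by auto
  qed (fact shells)+
qed

text \<open>Off the Cantor set, B selects the only side on which the topology may differ from the
  Euclidean one; on the Cantor set both sides are non-Euclidean, and J prescribes the sets
  that may accumulate there.\<close>
definition side_ideal :: "real set \<Rightarrow> real set set \<Rightarrow> real set set" where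
  "side_ideal B J = {C. C \<inter> triadic_midpoints = {} \<and> C \<inter> cantor_set \<in> J \<and>
     (\<forall>z y. z \<notin> cantor_set \<longrightarrow> z islimpt (C \<inter> open_segment z y) \<longrightarrow> (z < y \<longleftrightarrow> z \<in> B))}"

lemma admissible_side_ideal:
  assumes "set_ideal J"
  shows "admissible_ideal (side_ideal B J)"
  unfolding admissible_ideal_def set_ideal_def
proof (intro conjI ballI allI impI)
  show "{} \<in> side_ideal B J"
    using assms unfolding side_ideal_def set_ideal_def by simp
next
  fix A C assume A: "A \<in> side_ideal B J" and C: "C \<in> side_ideal B J"
  have "(A \<union> C) \<inter> cantor_set \<in> J"
    using A C assms unfolding side_ideal_def set_ideal_def by (simp add: Int_Un_distrib2)
  then show "A \<union> C \<in> side_ideal B J"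
    using A C unfolding side_ideal_def by (auto simp: Int_Un_distrib2 islimpt_Un)
next
  fix A C assume A: "A \<in> side_ideal B J" and "C \<subseteq> A"
  have "A \<inter> cantor_set \<in> J" "C \<inter> cantor_set \<subseteq> A \<inter> cantor_set"
    using A \<open>C \<subseteq> A\<close> unfolding side_ideal_def by blast+
  then have "C \<inter> cantor_set \<in> J"
    using assms unfolding set_ideal_def by blast
  moreover have "z islimpt (A \<inter> open_segment z y)" if "z islimpt (C \<inter> open_segment z y)" for z y
    by (rule islimpt_subset[OF that]) (use \<open>C \<subseteq> A\<close> in blast)
  ultimately show "C \<in> side_ideal B J"
    using A \<open>C \<subseteq> A\<close> unfolding side_ideal_def by blast
qed (auto simp: side_ideal_def)

lemma nonstandard_towards_side_ideal:
  assumes J: "set_ideal J" and "y \<noteq> x"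
  shows "nonstandard_towards (ideal_topology (side_ideal B J)) x y \<longleftrightarrow>
    x \<in> cantor_set \<or> (x < y \<longleftrightarrow> x \<in> B)"
proof -
  have ideal: "set_ideal (side_ideal B J)"
    using admissible_side_ideal[OF J] unfolding admissible_ideal_def by blast
  show ?thesis
    unfolding nonstandard_towards_ideal_topology[OF ideal]
  proof
    assume "\<exists>C\<in>side_ideal B J. x islimpt (C \<inter> open_segment x y)"
    then show "x \<in> cantor_set \<or> (x < y \<longleftrightarrow> x \<in> B)"
      unfolding side_ideal_def by blast
  next
    assume side: "x \<in> cantor_set \<or> (x < y \<longleftrightarrow> x \<in> B)"
    obtain R where R: "R \<subseteq> open_segment x y" "R \<inter> (cantor_set \<union> triadic_midpoints) = {}"
      and lim: "x islimpt R" and only: "\<And>z. z islimpt R \<Longrightarrow> z = x"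
      using exists_sequence_towards[OF \<open>y \<noteq> x\<close>] by blast
    have "z < y' \<longleftrightarrow> z \<in> B"
      if z: "z \<notin> cantor_set" and lim_z: "z islimpt (R \<inter> open_segment z y')" for z y'
    proof -
      have "z = x"
        using only islimpt_subset[OF lim_z] by blast
      then have "R \<inter> open_segment x y' \<noteq> {}"
        using lim_z by (metis islimpt_EMPTY)
      then obtain w where "w \<in> open_segment x y" "w \<in> open_segment x y'"
        using R(1) by blast
      then have "x < y' \<longleftrightarrow> x < y"
        by (auto simp: open_segment_eq_real_ivl split: if_splits)
      then show ?thesis
        using side z \<open>z = x\<close> by blast
    qed
    moreover have "R \<inter> cantor_set = {}"
      using R(2) by blast
    then have "R \<inter> cantor_set \<in> J"
      using J unfolding set_ideal_def by simp
    ultimately have "R \<in> side_ideal B J"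
      using R(2) unfolding side_ideal_def by blast
    moreover have "x islimpt (R \<inter> open_segment x y)"
      using lim R(1) by (simp add: Int_absorb2)
    ultimately show "\<exists>C\<in>side_ideal B J. x islimpt (C \<inter> open_segment x y)"
      by blast
  qed
qed

lemma Gamma_side_ideal:
  assumes "set_ideal J"
  shows "Gamma (ideal_topology (side_ideal B J)) = UNIV"
proof -
  have "x \<in> Gamma (ideal_topology (side_ideal B J))" for x
  proof (cases "x \<in> B")
    case True
    then show ?thesis
      using nonstandard_towards_side_ideal[OF assms, of "x + 1" x] nonstandard_towards_imp_Gamma by auto
  next
    case False
    then show ?thesis
      using nonstandard_towards_side_ideal[OF assms, of "x - 1" x] nonstandard_towards_imp_Gamma by auto
  qed
  then show ?thesis
    by blast
qed

text \<open>Read x \<in> B as: the right side of x is the non-Euclidean one. Every continuous injection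
  other than the identity then fails, at some point x off the Cantor set, to carry the selected side
  of x to the selected side of f x (an increasing f preserves sides, a decreasing one swaps them).\<close>
definition rigidifying_set :: "real set \<Rightarrow> bool" where
  "rigidifying_set B \<longleftrightarrow> (\<forall>f. continuous_on UNIV f \<and> inj f \<and> f \<noteq> id \<longrightarrow>
     (\<exists>x. x \<notin> cantor_set \<and> (x \<in> B \<longleftrightarrow> (f x \<in> B \<longleftrightarrow> \<not> f 0 < f 1))))"

lemma exists_rigidifying_set: "\<exists>B. rigidifying_set B"
proof -
  let ?F = "{f :: real \<Rightarrow> real. continuous_on UNIV f \<and> inj f \<and> f \<noteq> id}"
  let ?M = "\<lambda>f. {x. x \<notin> cantor_set \<and> f x \<noteq> x}"
  have "\<exists>B. \<forall>f\<in>?F. \<exists>x\<in>?M f. x \<in> B \<longleftrightarrow> (f x \<in> B \<longleftrightarrow> \<not> f 0 < f 1)"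
  proof (rule transfinite_diagonal_set)
    show "infinite (UNIV :: real set)"
      by (rule infinite_UNIV_char_0)
    have "?F \<lesssim> {f :: real \<Rightarrow> real. continuous_on UNIV f}"
      by (rule subset_imp_lepoll) blast
    then show "?F \<lesssim> (UNIV :: real set)"
      using continuous_functions_lepoll_reals by (rule lepoll_trans)
  next
    fix f assume f: "f \<in> ?F"
    then show "inj_on f (?M f)"
      using inj_on_subset by blast
    have "open {x. f x \<noteq> x}"
      by (rule open_Collect_neq) (use f in \<open>auto intro: continuous_on_id\<close>)
    moreover have M: "?M f = {x. f x \<noteq> x} - cantor_set"
      by blast
    ultimately have "open (?M f)"
      using open_Diff[OF _ closed_cantor_set] by simp
    moreover have "{x. f x \<noteq> x} \<noteq> {}"
      using f by auto
    then have "?M f \<noteq> {}"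
      unfolding M by (rule open_Diff_cantor_set_nonempty[OF \<open>open {x. f x \<noteq> x}\<close>])
    ultimately obtain y r where "r > 0" "ball y r \<subseteq> ?M f"
      by (meson ex_in_conv open_contains_ball)
    then have "?M f \<approx> (UNIV :: real set)"
      by (intro eqpoll_real_subset[of "y - r" "y + r"]) (auto simp: dist_real_def subset_iff)
    then show "(UNIV :: real set) \<lesssim> ?M f"
      using eqpoll_imp_lepoll eqpoll_sym by blast
  qed auto
  then obtain B where B: "\<forall>f\<in>?F. \<exists>x\<in>?M f. x \<in> B \<longleftrightarrow> (f x \<in> B \<longleftrightarrow> \<not> f 0 < f 1)"
    by blast
  show ?thesis
    unfolding rigidifying_set_def
  proof (intro exI[of _ B] allI impI)
    fix f :: "real \<Rightarrow> real"
    assume "continuous_on UNIV f \<and> inj f \<and> f \<noteq> id"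
    then obtain x where "x \<in> ?M f" "x \<in> B \<longleftrightarrow> (f x \<in> B \<longleftrightarrow> \<not> f 0 < f 1)"
      using bspec[OF B, of f] by blast
    then show "\<exists>x. x \<notin> cantor_set \<and> (x \<in> B \<longleftrightarrow> (f x \<in> B \<longleftrightarrow> \<not> f 0 < f 1))"
      by blast
  qed
qed

lemma side_ideal_topology_rigid:
  assumes B: "rigidifying_set B" and J1: "set_ideal J1" and J2: "set_ideal J2"
    and hk: "homeomorphic_maps (ideal_topology (side_ideal B J1))
      (subtopology (ideal_topology (side_ideal B J2)) S) h k"
  shows "S = UNIV" and "ideal_topology (side_ideal B J1) = ideal_topology (side_ideal B J2)"
proof -
  note emb = ideal_topology_embedding[OF admissible_side_ideal[OF J1] admissible_side_ideal[OF J2] hk]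
  have inj: "inj h"
    using emb(2) by (metis injI)
  have side: "x \<in> cantor_set \<or> (x < y \<longleftrightarrow> x \<in> B) \<longleftrightarrow>
      h x \<in> cantor_set \<or> (h x < h y \<longleftrightarrow> h x \<in> B)" if "y \<noteq> x" for x y
    using emb(5)[of x y] nonstandard_towards_side_ideal[OF J1 that]
      nonstandard_towards_side_ideal[OF J2, of "h y" "h x"] that
    by (simp add: inj_eq[OF inj])
  have off_cantor: "h x \<notin> cantor_set" if "x \<notin> cantor_set" for x
    using side[of "x + 1" x] side[of "x - 1" x] that by auto
  have "h = id"
  proof (rule ccontr)
    assume "h \<noteq> id"
    then obtain x where x: "x \<notin> cantor_set" and diag: "x \<in> B \<longleftrightarrow> (h x \<in> B \<longleftrightarrow> \<not> h 0 < h 1)"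
      using B emb(3) inj unfolding rigidifying_set_def by blast
    have "x \<in> B \<longleftrightarrow> (h x < h (x + 1) \<longleftrightarrow> h x \<in> B)"
      using side[of "x + 1" x] x off_cantor[OF x] by auto
    moreover have "h x < h (x + 1) \<longleftrightarrow> h 0 < h 1"
      using emb(4)[of x "x + 1"] by simp
    ultimately show False
      using diag by blast
  qed
  then show "S = UNIV"
    using emb(1) by simp
  have "k = id"
    using emb(2) \<open>h = id\<close> by auto
  then have "homeomorphic_maps (ideal_topology (side_ideal B J1)) (ideal_topology (side_ideal B J2)) id id"
    using hk \<open>h = id\<close> \<open>S = UNIV\<close> subtopology_topspace[of "ideal_topology (side_ideal B J2)"]
      topspace_ideal_topology admissible_side_ideal[OF J2]
    unfolding admissible_ideal_def by simp
  then show "ideal_topology (side_ideal B J1) = ideal_topology (side_ideal B J2)"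
    using homeomorphic_maps_id by metis
qed

lemma incomparable_family_side_ideal_topology:
  assumes B: "rigidifying_set B" and J: "\<And>i. i \<in> I \<Longrightarrow> set_ideal (J i)"
  shows "incomparable_family ((\<lambda>i. ideal_topology (side_ideal B (J i))) ` I) id"
  unfolding incomparable_family_def
proof (intro ballI allI impI)
  fix \<sigma> \<rho> S
  assume "\<sigma> \<in> (\<lambda>i. ideal_topology (side_ideal B (J i))) ` I" "\<rho> \<in> (\<lambda>i. ideal_topology (side_ideal B (J i))) ` I"
    and "S \<subseteq> topspace (id \<rho>) \<and> id \<sigma> homeomorphic_space subtopology (id \<rho>) S"
  then obtain i j h k where "i \<in> I" "j \<in> I" and \<sigma>: "\<sigma> = ideal_topology (side_ideal B (J i))"
    and \<rho>: "\<rho> = ideal_topology (side_ideal B (J j))"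
    and hk: "homeomorphic_maps (ideal_topology (side_ideal B (J i)))
      (subtopology (ideal_topology (side_ideal B (J j))) S) h k"
    unfolding homeomorphic_space_def by auto
  note rigid = side_ideal_topology_rigid[OF B J[OF \<open>i \<in> I\<close>] J[OF \<open>j \<in> I\<close>] hk]
  have "set_ideal (side_ideal B (J j))"
    using admissible_side_ideal[OF J[OF \<open>j \<in> I\<close>]] unfolding admissible_ideal_def by blast
  then have "topspace \<rho> = UNIV"
    unfolding \<rho> by (rule topspace_ideal_topology)
  then show "\<sigma> = \<rho> \<and> S = topspace (id \<rho>)"
    using rigid unfolding \<sigma> \<rho> id_def by blast
qed

section \<open>An independent family in the Cantor set\<close>

definition cantor_point :: "nat \<Rightarrow> nat set \<Rightarrow> real" where
  "cantor_point n A = ternary (insert n ((+) (Suc n) ` A))"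

lemma cantor_point_bounds: "0 < cantor_point n A" "cantor_point n A \<le> 1 / 3 ^ n"
proof -
  let ?D = "insert n ((+) (Suc n) ` A)"
  have "ternary_prefix n ?D = ternary_prefix n {}"
    by (rule ternary_prefix_cong) auto
  then have "ternary_prefix n ?D = 0"
    by (simp add: ternary_prefix_empty)
  then have "3 ^ n * cantor_point n A = ternary ((\<lambda>m. m + n) -` ?D)"
    using ternary_shift[of n ?D] unfolding cantor_point_def by simp
  moreover have "2/3 \<le> ternary ((\<lambda>m. m + n) -` ?D)"
    by (rule ternary_first_digit(1)) simp
  moreover have "ternary ((\<lambda>m. m + n) -` ?D) \<le> 1"
    by (rule ternary_le_1)
  ultimately have "0 < 3 ^ n * cantor_point n A" "3 ^ n * cantor_point n A \<le> 1"
    by linarith+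
  then show "0 < cantor_point n A" "cantor_point n A \<le> 1 / 3 ^ n"
    by (simp_all add: zero_less_mult_iff field_simps)
qed

lemma cantor_point_eq_iff: "cantor_point n A = cantor_point n' A' \<longleftrightarrow> n = n' \<and> A = A'"
proof
  assume "cantor_point n A = cantor_point n' A'"
  then have eq: "insert n ((+) (Suc n) ` A) = insert n' ((+) (Suc n') ` A')"
    unfolding cantor_point_def by (simp add: inj_eq[OF inj_ternary])
  then have "n \<in> insert n' ((+) (Suc n') ` A')" "n' \<in> insert n ((+) (Suc n) ` A)"
    by blast+
  then have "n = n'"
    by auto
  moreover have "insert n ((+) (Suc n) ` A) = insert n ((+) (Suc n) ` A')"
    using eq \<open>n = n'\<close> by simp
  then have "(+) (Suc n) ` A = (+) (Suc n) ` A'"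
    by (subst (asm) insert_ident) auto
  moreover have "inj ((+) (Suc n))"
    by (simp add: inj_on_def)
  ultimately have "A = A'"
    using inj_image_eq_iff by blast
  with \<open>n = n'\<close> show "n = n' \<and> A = A'"
    by blast
qed simp

definition tuple_code :: "nat \<Rightarrow> (nat \<Rightarrow> real) \<Rightarrow> nat set \<Rightarrow> nat set" where
  "tuple_code k w P = seq_code (\<lambda>i. if i = 0 then {k} else if i = 1 then P else real_code (w (i - 2)))"

lemma tuple_code_eq_iff: "tuple_code k w P = tuple_code k' w' P' \<longleftrightarrow> k = k' \<and> w = w' \<and> P = P'"
proof
  assume "tuple_code k w P = tuple_code k' w' P'"
  then have eq: "(\<lambda>i. if i = 0 then {k} else if i = 1 then P else real_code (w (i - 2))) =
      (\<lambda>i. if i = 0 then {k'} else if i = 1 then P' else real_code (w' (i - 2)))"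
    unfolding tuple_code_def by (simp add: inj_eq[OF inj_seq_code])
  have "k = k'" "P = P'"
    using fun_cong[OF eq, of 0] fun_cong[OF eq, of 1] by simp_all
  moreover have "w i = w' i" for i
    using fun_cong[OF eq, of "i + 2"] by (simp add: inj_eq[OF inj_real_code])
  ultimately show "k = k' \<and> w = w' \<and> P = P'"
    by blast
qed simp

text \<open>Hausdorff's independent family, realised inside the Cantor set arbitrarily close to 0:
  a point records finitely many test points w 0, ..., w (k - 1) together with the set P of
  indices of those lying in X.\<close>
definition independent_set :: "real set \<Rightarrow> real set" where
  "independent_set X = {cantor_point n (tuple_code k w P) | n k w P. \<forall>i<k. w i \<in> X \<longleftrightarrow> i \<in> P}"

lemma independent_set_subset: "independent_set X \<subseteq> cantor_set \<inter> {0<..}"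
  unfolding independent_set_def cantor_point_def
  using ternary_in_cantor_set cantor_point_bounds(1)[unfolded cantor_point_def] by auto

lemma independent_set_avoids_finite:
  assumes "finite \<F>" "X \<notin> \<F>" "e > 0"
  shows "\<exists>a\<in>independent_set X. a < e \<and> a \<notin> \<Union>(independent_set ` \<F>)"
proof -
  obtain Ys where Ys: "set Ys = \<F>"
    using finite_list[OF assms(1)] by blast
  define k where "k = length Ys"
  have "\<exists>z. z \<in> X \<longleftrightarrow> z \<notin> Ys ! i" if "i < k" for i
  proof -
    have "Ys ! i \<noteq> X"
      using that Ys assms(2) unfolding k_def by auto
    then show ?thesis
      by blast
  qed
  then obtain w where w: "\<And>i. i < k \<Longrightarrow> w i \<in> X \<longleftrightarrow> w i \<notin> Ys ! i"
    by metis
  define P where "P = {i. w i \<in> X}"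
  obtain n :: nat where "1 / e < 3 ^ n"
    using real_arch_pow[of 3 "1 / e"] by auto
  then have "1 / 3 ^ n < e"
    using assms(3) by (simp add: field_simps)
  define a where "a = cantor_point n (tuple_code k w P)"
  have "a \<in> independent_set X"
    unfolding independent_set_def a_def P_def by blast
  moreover have "a < e"
    using cantor_point_bounds(2)[of n "tuple_code k w P"] \<open>1 / 3 ^ n < e\<close> unfolding a_def by linarith
  moreover have "a \<notin> independent_set Y" if "Y \<in> \<F>" for Y
  proof
    assume "a \<in> independent_set Y"
    then obtain n' k' w' P' where "a = cantor_point n' (tuple_code k' w' P')"
      and Y: "\<forall>i<k'. w' i \<in> Y \<longleftrightarrow> i \<in> P'"
      unfolding independent_set_def by blast
    then have "k' = k" "w' = w" "P' = P"
      unfolding a_def by (simp_all add: cantor_point_eq_iff tuple_code_eq_iff)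
    obtain i where "i < k" "Ys ! i = Y"
      using \<open>Y \<in> \<F>\<close> Ys unfolding k_def by (metis in_set_conv_nth)
    then show False
      using Y w[of i] \<open>k' = k\<close> \<open>w' = w\<close> \<open>P' = P\<close> unfolding P_def by auto
  qed
  ultimately show ?thesis
    by blast
qed

definition generated_ideal :: "real set set \<Rightarrow> real set set" where
  "generated_ideal \<X> = {C. \<exists>\<F>. finite \<F> \<and> \<F> \<subseteq> \<X> \<and> C \<subseteq> \<Union>(independent_set ` \<F>)}"

lemma set_ideal_generated_ideal: "set_ideal (generated_ideal \<X>)"
  unfolding set_ideal_def
proof (intro conjI ballI allI impI)
  show "{} \<in> generated_ideal \<X>"
    unfolding generated_ideal_def by blast
next
  fix A C assume "A \<in> generated_ideal \<X>" "C \<in> generated_ideal \<X>"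
  then obtain \<F>1 \<F>2 where "finite \<F>1" "\<F>1 \<subseteq> \<X>" "A \<subseteq> \<Union>(independent_set ` \<F>1)"
    and "finite \<F>2" "\<F>2 \<subseteq> \<X>" "C \<subseteq> \<Union>(independent_set ` \<F>2)"
    unfolding generated_ideal_def by blast
  then show "A \<union> C \<in> generated_ideal \<X>"
    unfolding generated_ideal_def by (intro CollectI exI[of _ "\<F>1 \<union> \<F>2"]) auto
next
  fix A C assume "A \<in> generated_ideal \<X>" "C \<subseteq> A"
  then show "C \<in> generated_ideal \<X>"
    unfolding generated_ideal_def by blast
qed

lemma side_ideal_topology_generated_ideal_neq:
  assumes "X \<in> \<X>1" "X \<notin> \<X>2"
  shows "ideal_topology (side_ideal B (generated_ideal \<X>1)) \<noteq> ideal_topology (side_ideal B (generated_ideal \<X>2))"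
proof
  let ?A = "independent_set X"
  have ideal: "set_ideal (side_ideal B (generated_ideal \<X>))" for \<X>
    using admissible_side_ideal[OF set_ideal_generated_ideal] unfolding admissible_ideal_def by blast
  assume eq: "ideal_topology (side_ideal B (generated_ideal \<X>1)) = ideal_topology (side_ideal B (generated_ideal \<X>2))"
  have A: "?A \<subseteq> cantor_set" "0 \<notin> ?A"
    using independent_set_subset by auto
  have "\<not> z islimpt (?A \<inter> open_segment z y)" if "z \<notin> cantor_set" for z y
    using that A(1) closed_cantor_set islimpt_subset[of z _ cantor_set] unfolding closed_limpt by blast
  moreover have "?A \<inter> cantor_set \<in> generated_ideal \<X>1"
    unfolding generated_ideal_def using assms(1) by (intro CollectI exI[of _ "{X}"]) auto
  moreover have "?A \<inter> triadic_midpoints = {}"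
    using A(1) triadic_midpoints_cantor_set_disjoint by blast
  ultimately have "?A \<in> side_ideal B (generated_ideal \<X>1)"
    unfolding side_ideal_def by blast
  then have "openin (ideal_topology (side_ideal B (generated_ideal \<X>1))) (- ?A)"
    unfolding openin_ideal_topology[OF ideal] by (intro ballI exI[of _ 1] conjI bexI[of _ ?A]) auto
  then have "openin (ideal_topology (side_ideal B (generated_ideal \<X>2))) (- ?A)"
    unfolding eq .
  then obtain e C where "e > 0" and C: "C \<in> side_ideal B (generated_ideal \<X>2)" and "ball 0 e - C \<subseteq> - ?A"
    using openin_ideal_topologyD[OF ideal] A(2) by (metis ComplI)
  obtain \<F> where "finite \<F>" "\<F> \<subseteq> \<X>2" and cover: "C \<inter> cantor_set \<subseteq> \<Union>(independent_set ` \<F>)"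
    using C unfolding side_ideal_def generated_ideal_def by blast
  moreover have "X \<notin> \<F>"
    using \<open>\<F> \<subseteq> \<X>2\<close> assms(2) by blast
  ultimately obtain a where a: "a \<in> ?A" "a < e" "a \<notin> \<Union>(independent_set ` \<F>)"
    using independent_set_avoids_finite \<open>e > 0\<close> by blast
  have "0 < a"
    using a(1) independent_set_subset by blast
  then have "a \<in> ball 0 e"
    using a(2) by (simp add: dist_real_def)
  moreover have "a \<notin> C"
    using a A(1) cover by blast
  ultimately show False
    using \<open>ball 0 e - C \<subseteq> - ?A\<close> a(1) by blast
qed

lemma inj_side_ideal_topology_generated_ideal:
  "inj (\<lambda>\<X>. ideal_topology (side_ideal B (generated_ideal \<X>)))"
proof (rule injI, rule ccontr)
  fix \<X>1 \<X>2 :: "real set set"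
  assume eq: "ideal_topology (side_ideal B (generated_ideal \<X>1)) =
    ideal_topology (side_ideal B (generated_ideal \<X>2))" and "\<X>1 \<noteq> \<X>2"
  then obtain X where "X \<in> \<X>1 \<and> X \<notin> \<X>2 \<or> X \<in> \<X>2 \<and> X \<notin> \<X>1"
    by blast
  then show False
    using side_ideal_topology_generated_ideal_neq[of X] eq by metis
qed

theorem theorem6:
  shows "\<exists>E. (\<forall>\<tau>\<in>E. finer_than_euclidean \<tau>) \<and> E \<approx> Pow (Pow (UNIV :: real set)) \<and>
    (\<forall>\<tau>\<in>E. Gamma \<tau> = UNIV \<and> Hausdorff_space \<tau> \<and> separable_space \<tau> \<and> connected_space \<tau>) \<and>
    incomparable_family E id"
proof -
  obtain B where B: "rigidifying_set B"
    using exists_rigidifying_set by blast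
  let ?\<tau> = "\<lambda>\<X>. ideal_topology (side_ideal B (generated_ideal \<X>))"
  have adm: "admissible_ideal (side_ideal B (generated_ideal \<X>))" for \<X>
    using admissible_side_ideal[OF set_ideal_generated_ideal] .
  then have "finer_than_euclidean (?\<tau> \<X>)" for \<X>
    unfolding admissible_ideal_def by (blast intro: finer_than_euclidean_ideal_topology)
  moreover have "Gamma (?\<tau> \<X>) = UNIV" for \<X>
    by (rule Gamma_side_ideal[OF set_ideal_generated_ideal])
  moreover note Hausdorff_space_finer_than_euclidean separable_space_ideal_topology[OF adm]
    connected_space_ideal_topology[OF adm]
  moreover have "?\<tau> ` Pow (Pow UNIV) \<approx> Pow (Pow (UNIV :: real set))"
    using inj_side_ideal_topology_generated_ideal[of B]
    by (intro inj_on_image_eqpoll_self) (simp add: inj_on_def)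
  moreover have "incomparable_family (?\<tau> ` Pow (Pow UNIV)) id"
    by (rule incomparable_family_side_ideal_topology[OF B set_ideal_generated_ideal])
  ultimately show ?thesis
    by (intro exI[of _ "?\<tau> ` Pow (Pow UNIV)"]) auto
qed

end
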